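(* Let $\Sigma$ be a non-empty finite or countably infinite alphabet and let $\mu$ be a probability map over $\Sigma$ that is not induced by any Bernoulli distribution on $\Sigma$. Then there exists a finite word $w\in\Sigma^*$ such that for every $\mu$-distributed $\alpha\in\Sigma^\omega$, the Postnikova strategy $\mathcal S_w=\{vw: v\in\Sigma^*\}$ selects from $\alpha$ an infinite sequence $\mathcal S_w[\alpha]$ that is not $\mu$-distributed.
   Context: A probability map over $\Sigma$ is $\mu:\Sigma^+\to[0,1]$ with $\sum_{w\in\Sigma^n}\mu(w)=1$ for each $n\ge1$ (convention $\mu(\lambda)=1$). $\mu$ is induced by a Bernoulli distribution $p:\Sigma\to[0,1]$ with $\sum_a p(a)=1$ if $\mu(a_1\cdots a_n)=\prod_i p(a_i)$ for all words. $\#_w(v)$ is the number of (possibly overlapping) occurrences of $w$ as a contiguous block in $v$; $\alpha$ is $\mu$-distributed if $\lim_{N\to\infty}\#_w(\alpha|_{\le N})/N=\mu(w)$ for all $w\in\Sigma^+$, where $\alpha|_{\le N}$ is the length-$N$ prefix. For a strategy $S\subseteq\Sigma^*$, $S[\alpha]$ is the subsequence of those $\alpha_i$ with $\alpha_1\cdots\alpha_{i-1}\in S$. *)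

theory Defs
  imports "HOL-Analysis.Analysis" "HOL-Library.Countable"
begin

text \<open>Words over the alphabet 'a are lists; infinite sequences are functions nat => 'a
  (position 0 is the first letter). A probability map is given on all words, with the
  convention mu [] = 1.\<close>

definition prob_map :: "('a list \<Rightarrow> real) \<Rightarrow> bool" where
  "prob_map \<mu> \<longleftrightarrow> \<mu> [] = 1 \<and>
     (\<forall>w. w \<noteq> [] \<longrightarrow> 0 \<le> \<mu> w \<and> \<mu> w \<le> 1) \<and>
     (\<forall>n\<ge>1. (\<mu> has_sum 1) {w. length w = n})"

definition bernoulli_dist :: "('a \<Rightarrow> real) \<Rightarrow> bool" where
  "bernoulli_dist p \<longleftrightarrow> (\<forall>a. 0 \<le> p a \<and> p a \<le> 1) \<and> (p has_sum 1) UNIV"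

definition induced_by_bernoulli :: "('a list \<Rightarrow> real) \<Rightarrow> ('a \<Rightarrow> real) \<Rightarrow> bool" where
  "induced_by_bernoulli \<mu> p \<longleftrightarrow> bernoulli_dist p \<and>
     (\<forall>w. w \<noteq> [] \<longrightarrow> \<mu> w = (\<Prod>i<length w. p (w ! i)))"

definition occ_count :: "'a list \<Rightarrow> 'a list \<Rightarrow> nat" where
  "occ_count w v = card {i. i + length w \<le> length v \<and> take (length w) (drop i v) = w}"

definition prefix_seq :: "(nat \<Rightarrow> 'a) \<Rightarrow> nat \<Rightarrow> 'a list" where
  "prefix_seq \<alpha> N = map \<alpha> [0..<N]"

definition mu_distributed :: "('a list \<Rightarrow> real) \<Rightarrow> (nat \<Rightarrow> 'a) \<Rightarrow> bool" where
  "mu_distributed \<mu> \<alpha> \<longleftrightarrow>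
     (\<forall>w. w \<noteq> [] \<longrightarrow>
        (\<lambda>N. real (occ_count w (prefix_seq \<alpha> N)) / real N) \<longlonglongrightarrow> \<mu> w)"

definition selected_pos :: "'a list set \<Rightarrow> (nat \<Rightarrow> 'a) \<Rightarrow> nat set" where
  "selected_pos S \<alpha> = {i. prefix_seq \<alpha> i \<in> S}"

definition select_seq :: "'a list set \<Rightarrow> (nat \<Rightarrow> 'a) \<Rightarrow> nat \<Rightarrow> 'a" where
  "select_seq S \<alpha> = \<alpha> \<circ> enumerate (selected_pos S \<alpha>)"

definition postnikova :: "'a list \<Rightarrow> 'a list set" where
  "postnikova w = {v @ w | v. True}"

end

theory Submission
  imports Defs
begin

text \<open>The letters selected by the Postnikova strategy for \<open>w\<close> are exactly the letters that follow
  an occurrence of \<open>w\<close>. If \<open>\<alpha>\<close> is \<open>\<mu>\<close>-distributed and \<open>\<mu> w > 0\<close>, the \<open>M\<close>-th selected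
  position is about \<open>M / \<mu> w\<close>, so the frequency of a letter \<open>a\<close> in the selected sequence tends
  to \<open>\<mu> (w a) / \<mu> w\<close>. Hence, if for every \<open>w\<close> the selected sequence were again
  \<open>\<mu>\<close>-distributed, then \<open>\<mu> (w a) = \<mu> w \<cdot> \<mu> a\<close> (trivially also when \<open>\<mu> w = 0\<close>), and by
  induction on the length \<open>\<mu>\<close> would be induced by the Bernoulli distribution \<open>a \<mapsto> \<mu> a\<close>.\<close>

lemma take_drop_prefix_seq:
  "k + L \<le> N \<Longrightarrow> take L (drop k (prefix_seq \<alpha> N)) = map \<alpha> [k..<k + L]"
  by (simp add: prefix_seq_def drop_map take_map)

lemma length_prefix_seq [simp]: "length (prefix_seq \<alpha> N) = N"
  by (simp add: prefix_seq_def)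

lemma occ_count_prefix_seq:
  "occ_count w (prefix_seq \<alpha> N) = card {k. k + length w \<le> N \<and> map \<alpha> [k..<k + length w] = w}"
  unfolding occ_count_def
  by (rule arg_cong[where f = card]) (auto simp: take_drop_prefix_seq)

lemma map_upt_eq_append_iff:
  "map \<alpha> [k..<k + length (w @ u)] = w @ u \<longleftrightarrow>
     map \<alpha> [k..<k + length w] = w \<and> map \<alpha> [k + length w..<k + length w + length u] = u"
proof -
  have "[k..<k + length (w @ u)] = [k..<k + length w] @ [k + length w..<k + length w + length u]"
    using upt_add_eq_append[of k "k + length w" "length u"] by (simp add: add.assoc)
  then show ?thesis by (simp add: append_eq_append_conv)
qed

lemma prefix_seq_in_postnikova_iff:
  "prefix_seq \<alpha> i \<in> postnikova w \<longleftrightarrow> length w \<le> i \<and> map \<alpha> [i - length w..<i] = w"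
proof
  assume "prefix_seq \<alpha> i \<in> postnikova w"
  then obtain v where v: "map \<alpha> [0..<i] = v @ w"
    by (auto simp: postnikova_def prefix_seq_def)
  then have "length v = i - length w" "length w \<le> i"
    by (metis add_diff_cancel_right' le_add2 length_append length_map length_upt minus_nat.diff_0)+
  moreover have "w = drop (length v) (map \<alpha> [0..<i])"
    using v by simp
  ultimately show "length w \<le> i \<and> map \<alpha> [i - length w..<i] = w"
    by (simp add: drop_map)
next
  assume "length w \<le> i \<and> map \<alpha> [i - length w..<i] = w"
  then have "prefix_seq \<alpha> i = map \<alpha> [0..<i - length w] @ w"
    unfolding prefix_seq_def by (metis le_add_diff_inverse2 map_append upt_add_eq_append zero_le)
  then show "prefix_seq \<alpha> i \<in> postnikova w"
    by (auto simp: postnikova_def)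
qed

lemma occ_count_append_prefix_seq:
  "occ_count (w @ u) (prefix_seq \<alpha> N) =
     card {i \<in> selected_pos (postnikova w) \<alpha>. i + length u \<le> N \<and> map \<alpha> [i..<i + length u] = u}"
proof -
  let ?L = "length w"
  have "{i \<in> selected_pos (postnikova w) \<alpha>. i + length u \<le> N \<and> map \<alpha> [i..<i + length u] = u}
      = (\<lambda>k. k + ?L) ` {k. k + length (w @ u) \<le> N \<and> map \<alpha> [k..<k + length (w @ u)] = w @ u}"
  proof (intro set_eqI iffI)
    fix i assume "i \<in> {i \<in> selected_pos (postnikova w) \<alpha>. i + length u \<le> N \<and> map \<alpha> [i..<i + length u] = u}"
    then show "i \<in> (\<lambda>k. k + ?L) ` {k. k + length (w @ u) \<le> N \<and> map \<alpha> [k..<k + length (w @ u)] = w @ u}"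
      unfolding map_upt_eq_append_iff
      by (intro rev_image_eqI[where x = "i - ?L"]) (auto simp: selected_pos_def prefix_seq_in_postnikova_iff)
  next
    fix i assume "i \<in> (\<lambda>k. k + ?L) ` {k. k + length (w @ u) \<le> N \<and> map \<alpha> [k..<k + length (w @ u)] = w @ u}"
    then show "i \<in> {i \<in> selected_pos (postnikova w) \<alpha>. i + length u \<le> N \<and> map \<alpha> [i..<i + length u] = u}"
      unfolding map_upt_eq_append_iff
      by (auto simp: selected_pos_def prefix_seq_in_postnikova_iff add.commute add.left_commute)
  qed
  then show ?thesis
    by (simp add: occ_count_prefix_seq card_image inj_on_def)
qed

corollary occ_count_prefix_seq_postnikova:
  "occ_count w (prefix_seq \<alpha> N) = card {i \<in> selected_pos (postnikova w) \<alpha>. i \<le> N}"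
  using occ_count_append_prefix_seq[of w "[]" \<alpha> N] by simp

corollary occ_count_snoc_prefix_seq_postnikova:
  "occ_count (w @ [a]) (prefix_seq \<alpha> N) = card {i \<in> selected_pos (postnikova w) \<alpha>. i < N \<and> \<alpha> i = a}"
  using occ_count_append_prefix_seq[of w "[a]" \<alpha> N] by (simp add: Suc_le_eq)

lemma prob_map_nonneg: "prob_map \<mu> \<Longrightarrow> 0 \<le> \<mu> w"
  by (cases "w = []") (auto simp: prob_map_def)

lemma occ_count_append_le: "occ_count (w @ u) v \<le> occ_count w v"
  unfolding occ_count_def
proof (rule card_mono)
  show "finite {i. i + length w \<le> length v \<and> take (length w) (drop i v) = w}"
    by (rule finite_subset[of _ "{..length v}"]) auto
  show "{i. i + length (w @ u) \<le> length v \<and> take (length (w @ u)) (drop i v) = w @ u}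
        \<subseteq> {i. i + length w \<le> length v \<and> take (length w) (drop i v) = w}"
    by (auto simp: take_add)
qed

lemma mu_distributed_append_le:
  assumes "mu_distributed \<mu> \<alpha>" "w \<noteq> []"
  shows "\<mu> (w @ u) \<le> \<mu> w"
proof (rule LIMSEQ_le)
  show "(\<lambda>N. real (occ_count (w @ u) (prefix_seq \<alpha> N)) / real N) \<longlonglongrightarrow> \<mu> (w @ u)"
       "(\<lambda>N. real (occ_count w (prefix_seq \<alpha> N)) / real N) \<longlonglongrightarrow> \<mu> w"
    using assms by (simp_all add: mu_distributed_def)
  show "\<exists>N. \<forall>n\<ge>N. real (occ_count (w @ u) (prefix_seq \<alpha> n)) / real n
                    \<le> real (occ_count w (prefix_seq \<alpha> n)) / real n"
    by (intro exI allI impI divide_right_mono) (auto simp: occ_count_append_le)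
qed

lemma mu_distributed_infinite_selected_pos:
  assumes "mu_distributed \<mu> \<alpha>" "w \<noteq> []" "\<mu> w > 0"
  shows "infinite (selected_pos (postnikova w) \<alpha>)"
proof
  let ?P = "selected_pos (postnikova w) \<alpha>"
  assume "finite ?P"
  then have bound: "occ_count w (prefix_seq \<alpha> N) \<le> card ?P" for N
    unfolding occ_count_prefix_seq_postnikova by (intro card_mono) auto
  have "\<mu> w \<le> 0"
  proof (rule LIMSEQ_le)
    show "(\<lambda>N. real (occ_count w (prefix_seq \<alpha> N)) / real N) \<longlonglongrightarrow> \<mu> w"
      using assms by (simp add: mu_distributed_def)
    show "(\<lambda>N. real (card ?P) / real N) \<longlonglongrightarrow> 0"
      by (rule lim_const_over_n)
    show "\<exists>N. \<forall>n\<ge>N. real (occ_count w (prefix_seq \<alpha> n)) / real n \<le> real (card ?P) / real n"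
      using bound by (intro exI allI impI divide_right_mono) auto
  qed
  with assms show False by simp
qed

lemma enumerate_image_filter:
  fixes S :: "nat set"
  assumes "infinite S"
  shows "{i \<in> S. P i} = enumerate S ` {j. P (enumerate S j)}"
  using bij_enumerate[OF assms] by (auto simp: bij_betw_def)

lemma card_enumerate_filter:
  fixes S :: "nat set"
  assumes "infinite S"
  shows "card {i \<in> S. P i} = card {j. P (enumerate S j)}"
  using inj_enumerate[OF assms] by (simp add: enumerate_image_filter[OF assms] card_image inj_on_subset)

lemma limit_ratio_product_eq:
  fixes f g :: "nat \<Rightarrow> real"
  assumes "(\<lambda>n. f n / real n) \<longlonglongrightarrow> x" "(\<lambda>n. real n / g n) \<longlonglongrightarrow> d" "(\<lambda>n. f n / g n) \<longlonglongrightarrow> y"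
  shows "y = x * d"
proof (rule LIMSEQ_unique[OF assms(3)])
  have "\<forall>\<^sub>F n in sequentially. f n / real n * (real n / g n) = f n / g n"
    using eventually_gt_at_top[of 0] by eventually_elim simp
  with tendsto_mult[OF assms(1,2)] show "(\<lambda>n. f n / g n) \<longlonglongrightarrow> x * d"
    by (rule Lim_transform_eventually)
qed

lemma select_postnikova_distributed_imp_mu_snoc_mult:
  assumes \<alpha>: "mu_distributed \<mu> \<alpha>" and "w \<noteq> []"
    and inf: "infinite (selected_pos (postnikova w) \<alpha>)"
    and sel: "mu_distributed \<mu> (select_seq (postnikova w) \<alpha>)"
  shows "\<mu> (w @ [a]) = \<mu> w * \<mu> [a]"
proof -
  define e where "e = enumerate (selected_pos (postnikova w) \<alpha>)"
  define c where "c M = real (occ_count (w @ [a]) (prefix_seq \<alpha> (e M)))" for M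
  have e: "strict_mono e"
    using inf by (simp add: e_def strict_mono_def)
  have count_w: "occ_count w (prefix_seq \<alpha> (e M)) = Suc M" for M
    using inf by (simp add: occ_count_prefix_seq_postnikova card_enumerate_filter e_def)
  have count_a: "occ_count [a] (prefix_seq (select_seq (postnikova w) \<alpha>) M) = c M" for M
  proof -
    have "occ_count [a] (prefix_seq (select_seq (postnikova w) \<alpha>) M) = card {j. j < M \<and> \<alpha> (e j) = a}"
      by (simp add: occ_count_prefix_seq select_seq_def e_def Suc_le_eq)
    also have "\<dots> = card {i \<in> selected_pos (postnikova w) \<alpha>. i < e M \<and> \<alpha> i = a}"
      using card_enumerate_filter[OF inf, of "\<lambda>i. i < e M \<and> \<alpha> i = a"] inf by (simp add: e_def)
    finally show ?thesis
      by (simp add: c_def occ_count_snoc_prefix_seq_postnikova)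
  qed
  have "(\<lambda>N. real (occ_count w (prefix_seq \<alpha> N)) / real N) \<longlonglongrightarrow> \<mu> w"
    using \<alpha> \<open>w \<noteq> []\<close> by (simp add: mu_distributed_def)
  from LIMSEQ_subseq_LIMSEQ[OF this e]
  have freq_w: "(\<lambda>M. real (Suc M) / real (e M)) \<longlonglongrightarrow> \<mu> w"
    by (simp add: o_def count_w)
  have "(\<lambda>M. 1 / real (e M)) \<longlonglongrightarrow> 0"
    using LIMSEQ_subseq_LIMSEQ[OF lim_const_over_n[of 1] e] by (simp add: o_def)
  from tendsto_diff[OF freq_w this]
  have density: "(\<lambda>M. real M / real (e M)) \<longlonglongrightarrow> \<mu> w"
    by (simp add: diff_divide_distrib[symmetric])
  have freq_a: "(\<lambda>M. c M / real M) \<longlonglongrightarrow> \<mu> [a]"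
    using sel by (simp add: mu_distributed_def count_a[symmetric])
  have "(\<lambda>N. real (occ_count (w @ [a]) (prefix_seq \<alpha> N)) / real N) \<longlonglongrightarrow> \<mu> (w @ [a])"
    using \<alpha> by (simp add: mu_distributed_def)
  from LIMSEQ_subseq_LIMSEQ[OF this e]
  have freq_wa: "(\<lambda>M. c M / real (e M)) \<longlonglongrightarrow> \<mu> (w @ [a])"
    by (simp add: o_def c_def)
  show ?thesis
    using limit_ratio_product_eq[OF freq_a density freq_wa] by (simp add: mult.commute)
qed

lemma product_form_if_mu_snoc_mult:
  assumes "\<And>u a. u \<noteq> [] \<Longrightarrow> \<mu> (u @ [a]) = \<mu> u * \<mu> [a]"
  shows "w \<noteq> [] \<Longrightarrow> \<mu> w = (\<Prod>i<length w. \<mu> [w ! i])"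
proof (induction w rule: rev_induct)
  case (snoc a u)
  then show ?case
    by (cases "u = []") (simp_all add: assms nth_append)
qed simp

lemma prob_map_bernoulli_letters:
  assumes "prob_map \<mu>"
  shows "bernoulli_dist (\<lambda>a. \<mu> [a])"
proof -
  have "(\<mu> has_sum 1) {w. length w = 1}"
    using assms by (simp add: prob_map_def)
  moreover have "{w. length w = 1} = (\<lambda>a. [a]) ` UNIV"
    by (auto simp: length_Suc_conv)
  ultimately have "(\<mu> has_sum 1) ((\<lambda>a. [a]) ` UNIV)"
    by (metis (no_types))
  then have "((\<lambda>a. \<mu> [a]) has_sum 1) UNIV"
    by (subst (asm) has_sum_reindex) (auto simp: inj_on_def o_def)
  with assms show ?thesis
    by (simp add: bernoulli_dist_def prob_map_def)
qed

lemma postnikova_witness_imp_mu_snoc_mult: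
  assumes \<mu>: "prob_map \<mu>" and \<alpha>: "mu_distributed \<mu> \<alpha>" and "w \<noteq> []"
    and sel: "infinite (selected_pos (postnikova w) \<alpha>) \<Longrightarrow> mu_distributed \<mu> (select_seq (postnikova w) \<alpha>)"
  shows "\<mu> (w @ [a]) = \<mu> w * \<mu> [a]"
proof (cases "\<mu> w > 0")
  case True
  then have "infinite (selected_pos (postnikova w) \<alpha>)"
    by (rule mu_distributed_infinite_selected_pos[OF \<alpha> \<open>w \<noteq> []\<close>])
  then show ?thesis
    by (intro select_postnikova_distributed_imp_mu_snoc_mult[OF \<alpha> \<open>w \<noteq> []\<close>] sel)
next
  case False
  with prob_map_nonneg[OF \<mu>, of w] prob_map_nonneg[OF \<mu>, of "w @ [a]"]
    mu_distributed_append_le[OF \<alpha> \<open>w \<noteq> []\<close>, of "[a]"]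
  have "\<mu> w = 0" "\<mu> (w @ [a]) = 0"
    by linarith+
  then show ?thesis
    by simp
qed

theorem lemma4p1:
  fixes \<mu> :: "('a::countable) list \<Rightarrow> real"
  assumes "prob_map \<mu>"
    and "\<not> (\<exists>p. induced_by_bernoulli \<mu> p)"
  shows "\<exists>w. \<forall>\<alpha>. mu_distributed \<mu> \<alpha> \<longrightarrow>
           infinite (selected_pos (postnikova w) \<alpha>) \<and>
           \<not> mu_distributed \<mu> (select_seq (postnikova w) \<alpha>)"
proof (rule ccontr)
  assume "\<not> ?thesis"
  then have witness: "\<exists>\<alpha>. mu_distributed \<mu> \<alpha> \<and>
      (infinite (selected_pos (postnikova w) \<alpha>) \<longrightarrow> mu_distributed \<mu> (select_seq (postnikova w) \<alpha>))" for w
    by blast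
  have "\<mu> (w @ [a]) = \<mu> w * \<mu> [a]" if "w \<noteq> []" for w a
    using witness[of w] postnikova_witness_imp_mu_snoc_mult[OF assms(1) _ that] by blast
  then have "induced_by_bernoulli \<mu> (\<lambda>a. \<mu> [a])"
    unfolding induced_by_bernoulli_def
    using prob_map_bernoulli_letters[OF assms(1)] product_form_if_mu_snoc_mult by blast
  with assms(2) show False
    by blast
qed

end
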